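(* Let $(\mathfrak g,[\cdot,\cdot]_{\mathfrak g},E)$ be an ENL algebra, $(W;T,\rho)$ an ENE-representation of it, and $K:W\to\mathfrak g$ an ENE-relative Rota–Baxter operator with respect to $(W;T,\rho)$. Let $\bar K\in(\mathfrak g\oplus W^* )\otimes(\mathfrak g\oplus W^* )$ be the element corresponding to $K$ under $\mathrm{Hom}(W,\mathfrak g)\cong\mathfrak g\otimes W^*$, and $r_K:=\bar K-\sigma(\bar K)$ where $\sigma$ is the flip. Then $r_K$ is a skew-symmetric solution of the classical Yang–Baxter equation in the semidirect product ENL algebra $(\mathfrak g\ltimes_{\rho^*}W^*,E+T^* )$; that is, $[\![r_K,r_K]\!]=0$ in $\mathfrak g\ltimes_{\rho^*}W^*$ and $((E+T^* )\otimes\mathrm{Id}-\mathrm{Id}\otimes(E+T^* ))(r_K)=0$.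
   Context: All vector spaces are finite-dimensional over an algebraically closed field of characteristic zero. An ENL algebra is a Lie algebra with linear $E$ such that $E[x,y]=[x,Ey]$ for all $x,y$. An ENE-representation $(W;T,\rho)$ of $(\mathfrak g,E)$ is a representation $\rho:\mathfrak g\to\mathfrak{gl}(W)$ with linear $T:W\to W$ such that $T(\rho(x)u)=\rho(Ex)u=\rho(x)(Tu)$. An ENE-relative Rota–Baxter operator is a linear $K:W\to\mathfrak g$ with $[Ku,Kv]_{\mathfrak g}=K(\rho(Ku)v-\rho(Kv)u)$ for all $u,v\in W$ and $E\circ K=K\circ T$. The dual representation is $\langle\rho^*(x)\xi,u\rangle=-\langle\xi,\rho(x)u\rangle$, $T^*$ is the dual map of $T$. The semidirect product $\mathfrak g\ltimes_{\rho^*}W^*$ is $\mathfrak g\oplus W^*$ with bracket $[x+\xi,y+\eta]=[x,y]_{\mathfrak g}+\rho^*(x)\eta-\rho^*(y)\xi$, with operator $(E+T^* )(x+\xi)=Ex+T^*\xi$. Concretely $\bar K=\sum_iK(w_i)\otimes w_i^*$ for a basis $(w_i)$ of $W$ with dual basis $(w_i^* )$. For $r=\sum a_i\otimes b_i$, $[\![r,r]\!]=[r_{12},r_{13}]+[r_{13},r_{23}]+[r_{12},r_{23}]$ in the tensor cube of the universal enveloping algebra. *)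

theory Defs
  imports "HOL-Library.Function_Algebras" "HOL-Computational_Algebra.Polynomial"
begin

text \<open>Finite-dimensional vector spaces are modelled in coordinates: a space with a basis
indexed by the finite type 'i is 'i \<Rightarrow> 'k. The standard basis vectors are unitv i.\<close>

definition scl :: "'k::field \<Rightarrow> ('i \<Rightarrow> 'k) \<Rightarrow> ('i \<Rightarrow> 'k)" where
  "scl c x = (\<lambda>a. c * x a)"

definition unitv :: "'i \<Rightarrow> ('i \<Rightarrow> 'k::field)" where
  "unitv i = (\<lambda>l. if l = i then 1 else 0)"

definition lin :: "(('i \<Rightarrow> 'k::field) \<Rightarrow> ('j \<Rightarrow> 'k)) \<Rightarrow> bool" where
  "lin f \<longleftrightarrow> (\<forall>x y. f (x + y) = f x + f y) \<and> (\<forall>c x. f (scl c x) = scl c (f x))"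

definition alg_closed :: "'k::field itself \<Rightarrow> bool" where
  "alg_closed _ \<longleftrightarrow> (\<forall>p :: 'k poly. degree p \<noteq> 0 \<longrightarrow> (\<exists>x. poly p x = 0))"

definition lie_algebra :: "(('i \<Rightarrow> 'k::field) \<Rightarrow> ('i \<Rightarrow> 'k) \<Rightarrow> ('i \<Rightarrow> 'k)) \<Rightarrow> bool" where
  "lie_algebra br \<longleftrightarrow> (\<forall>x. lin (br x)) \<and> (\<forall>y. lin (\<lambda>x. br x y)) \<and> (\<forall>x. br x x = 0)
     \<and> (\<forall>x y z. br x (br y z) + br y (br z x) + br z (br x y) = 0)"

definition ENL :: "(('i \<Rightarrow> 'k::field) \<Rightarrow> ('i \<Rightarrow> 'k) \<Rightarrow> ('i \<Rightarrow> 'k)) \<Rightarrow> (('i \<Rightarrow> 'k) \<Rightarrow> ('i \<Rightarrow> 'k)) \<Rightarrow> bool" where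
  "ENL br E \<longleftrightarrow> lie_algebra br \<and> lin E \<and> (\<forall>x y. E (br x y) = br x (E y))"

definition representation ::
  "(('i \<Rightarrow> 'k::field) \<Rightarrow> ('i \<Rightarrow> 'k) \<Rightarrow> ('i \<Rightarrow> 'k)) \<Rightarrow> (('i \<Rightarrow> 'k) \<Rightarrow> ('j \<Rightarrow> 'k) \<Rightarrow> ('j \<Rightarrow> 'k)) \<Rightarrow> bool" where
  "representation br rho \<longleftrightarrow> (\<forall>u. lin (\<lambda>x. rho x u)) \<and> (\<forall>x. lin (rho x))
     \<and> (\<forall>x y u. rho (br x y) u = rho x (rho y u) - rho y (rho x u))"

definition ENE_rep ::
  "(('i \<Rightarrow> 'k::field) \<Rightarrow> ('i \<Rightarrow> 'k) \<Rightarrow> ('i \<Rightarrow> 'k)) \<Rightarrow> (('i \<Rightarrow> 'k) \<Rightarrow> ('i \<Rightarrow> 'k))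
    \<Rightarrow> (('j \<Rightarrow> 'k) \<Rightarrow> ('j \<Rightarrow> 'k)) \<Rightarrow> (('i \<Rightarrow> 'k) \<Rightarrow> ('j \<Rightarrow> 'k) \<Rightarrow> ('j \<Rightarrow> 'k)) \<Rightarrow> bool" where
  "ENE_rep br E T rho \<longleftrightarrow> representation br rho \<and> lin T
     \<and> (\<forall>x u. T (rho x u) = rho (E x) u \<and> rho (E x) u = rho x (T u))"

definition ENE_RB ::
  "(('i \<Rightarrow> 'k::field) \<Rightarrow> ('i \<Rightarrow> 'k) \<Rightarrow> ('i \<Rightarrow> 'k)) \<Rightarrow> (('i \<Rightarrow> 'k) \<Rightarrow> ('i \<Rightarrow> 'k))
    \<Rightarrow> (('j \<Rightarrow> 'k) \<Rightarrow> ('j \<Rightarrow> 'k)) \<Rightarrow> (('i \<Rightarrow> 'k) \<Rightarrow> ('j \<Rightarrow> 'k) \<Rightarrow> ('j \<Rightarrow> 'k))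
    \<Rightarrow> (('j \<Rightarrow> 'k) \<Rightarrow> ('i \<Rightarrow> 'k)) \<Rightarrow> bool" where
  "ENE_RB br E T rho K \<longleftrightarrow> lin K
     \<and> (\<forall>u v. br (K u) (K v) = K (rho (K u) v - rho (K v) u))
     \<and> (\<forall>u. E (K u) = K (T u))"

text \<open>Dual space W* in the dual basis: a functional is 'j \<Rightarrow> 'k, paired by
 <xi,u> = sum_j xi j * u j. Dual representation and dual map (transposes).\<close>

definition pairing :: "('j::finite \<Rightarrow> 'k::field) \<Rightarrow> ('j \<Rightarrow> 'k) \<Rightarrow> 'k" where
  "pairing xi u = (\<Sum>j\<in>UNIV. xi j * u j)"

definition dual_rep :: "(('i \<Rightarrow> 'k::field) \<Rightarrow> ('j::finite \<Rightarrow> 'k) \<Rightarrow> ('j \<Rightarrow> 'k))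
    \<Rightarrow> ('i \<Rightarrow> 'k) \<Rightarrow> ('j \<Rightarrow> 'k) \<Rightarrow> ('j \<Rightarrow> 'k)" where
  "dual_rep rho x xi = (\<lambda>j. - pairing xi (rho x (unitv j)))"

definition dual_map :: "(('j::finite \<Rightarrow> 'k::field) \<Rightarrow> ('j \<Rightarrow> 'k)) \<Rightarrow> ('j \<Rightarrow> 'k) \<Rightarrow> ('j \<Rightarrow> 'k)" where
  "dual_map T xi = (\<lambda>j. pairing xi (T (unitv j)))"

text \<open>The semidirect product g \<oplus> W*, with coordinates indexed by 'i + 'j.\<close>

definition gpart :: "('i + 'j \<Rightarrow> 'k) \<Rightarrow> ('i \<Rightarrow> 'k)" where
  "gpart z = (\<lambda>a. z (Inl a))"

definition wpart :: "('i + 'j \<Rightarrow> 'k) \<Rightarrow> ('j \<Rightarrow> 'k)" where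
  "wpart z = (\<lambda>j. z (Inr j))"

definition semidirect_br ::
  "(('i \<Rightarrow> 'k::field) \<Rightarrow> ('i \<Rightarrow> 'k) \<Rightarrow> ('i \<Rightarrow> 'k)) \<Rightarrow> (('i \<Rightarrow> 'k) \<Rightarrow> ('j::finite \<Rightarrow> 'k) \<Rightarrow> ('j \<Rightarrow> 'k))
    \<Rightarrow> ('i + 'j \<Rightarrow> 'k) \<Rightarrow> ('i + 'j \<Rightarrow> 'k) \<Rightarrow> ('i + 'j \<Rightarrow> 'k)" where
  "semidirect_br br rho z w =
     case_sum (br (gpart z) (gpart w))
       (dual_rep rho (gpart z) (wpart w) - dual_rep rho (gpart w) (wpart z))"

definition semidirect_op ::
  "(('i \<Rightarrow> 'k::field) \<Rightarrow> ('i \<Rightarrow> 'k)) \<Rightarrow> (('j::finite \<Rightarrow> 'k) \<Rightarrow> ('j \<Rightarrow> 'k))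
    \<Rightarrow> ('i + 'j \<Rightarrow> 'k) \<Rightarrow> ('i + 'j \<Rightarrow> 'k)" where
  "semidirect_op E T z = case_sum (E (gpart z)) (dual_map T (wpart z))"

text \<open>Tensors in L \<otimes> L (resp. L \<otimes> L \<otimes> L) for L = 'b \<Rightarrow> 'k are represented by their
coefficient arrays w.r.t. the basis unitv p \<otimes> unitv q.\<close>

definition flip :: "('b \<Rightarrow> 'b \<Rightarrow> 'k) \<Rightarrow> ('b \<Rightarrow> 'b \<Rightarrow> 'k)" where
  "flip r = (\<lambda>p q. r q p)"

text \<open>Kbar = sum_j K(w_j) \<otimes> w_j^*, an element of (g \<oplus> W*) \<otimes> (g \<oplus> W*).\<close>
definition Kbar :: "(('j \<Rightarrow> 'k::field) \<Rightarrow> ('i \<Rightarrow> 'k)) \<Rightarrow> ('i + 'j) \<Rightarrow> ('i + 'j) \<Rightarrow> 'k" where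
  "Kbar K p q = (case (p, q) of (Inl a, Inr j) \<Rightarrow> K (unitv j) a | _ \<Rightarrow> 0)"

definition rK :: "(('j \<Rightarrow> 'k::field) \<Rightarrow> ('i \<Rightarrow> 'k)) \<Rightarrow> ('i + 'j) \<Rightarrow> ('i + 'j) \<Rightarrow> 'k" where
  "rK K = (\<lambda>p q. Kbar K p q - flip (Kbar K) p q)"

text \<open>[[r,r]] = [r12,r13] + [r13,r23] + [r12,r23] for r = sum_{p,q} r p q e_p \<otimes> e_q, i.e.
 sum r p q r s t ([e_p,e_s] \<otimes> e_q \<otimes> e_t + e_p \<otimes> e_s \<otimes> [e_q,e_t] + e_p \<otimes> [e_q,e_s] \<otimes> e_t),
 given by its coefficient array.\<close>
definition cybe :: "(('b::finite \<Rightarrow> 'k::field) \<Rightarrow> ('b \<Rightarrow> 'k) \<Rightarrow> ('b \<Rightarrow> 'k))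
    \<Rightarrow> ('b \<Rightarrow> 'b \<Rightarrow> 'k) \<Rightarrow> 'b \<Rightarrow> 'b \<Rightarrow> 'b \<Rightarrow> 'k" where
  "cybe B r a b c =
      (\<Sum>p\<in>UNIV. \<Sum>s\<in>UNIV. r p b * r s c * B (unitv p) (unitv s) a)
    + (\<Sum>q\<in>UNIV. \<Sum>t\<in>UNIV. r a q * r b t * B (unitv q) (unitv t) c)
    + (\<Sum>q\<in>UNIV. \<Sum>s\<in>UNIV. r a q * r s c * B (unitv q) (unitv s) b)"

text \<open>(A \<otimes> Id - Id \<otimes> A)(r), as a coefficient array.\<close>
definition op_tensor_diff :: "(('b::finite \<Rightarrow> 'k::field) \<Rightarrow> ('b \<Rightarrow> 'k))
    \<Rightarrow> ('b \<Rightarrow> 'b \<Rightarrow> 'k) \<Rightarrow> 'b \<Rightarrow> 'b \<Rightarrow> 'k" where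
  "op_tensor_diff A r a b =
     (\<Sum>p\<in>UNIV. A (unitv p) a * r p b) - (\<Sum>q\<in>UNIV. r a q * A (unitv q) b)"

end

theory Submission
  imports Defs
begin

text \<open>
  In the basis of g + W*, r_K has the entry K(w_j)_a at (a, j) in g (x) W* and its negative at
  (j, a) in W* (x) g. Every entry of r_K thus pairs a g-index with a W*-index, while the bracket of
  the semidirect product sends g x g to g, g x W* to W* and W* x W* to 0. Hence the only components
  of [[r_K, r_K]] that can be nonzero have one g-index a and two W*-indices j, l, and each of them is
  plus or minus the a-th coordinate of [K w_j, K w_l] - K(rho(K w_j) w_l - rho(K w_l) w_j), which
  vanishes by the Rota-Baxter identity. Likewise the nonzero components of
  ((E + T*) (x) Id - Id (x) (E + T*))(r_K) are the coordinates (E K w_j - K T w_j)_a.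
\<close>

lemma sum_fun_apply: "(\<Sum>a\<in>A. f a) x = (\<Sum>a\<in>A. f a x)"
  by (induction A rule: infinite_finite_induct) auto

lemma sum_UNIV_Plus:
  "(\<Sum>p\<in>UNIV. f p) = (\<Sum>a\<in>UNIV. f (Inl a)) + (\<Sum>j\<in>UNIV. f (Inr j))"
  for f :: "'a::finite + 'b::finite \<Rightarrow> 'c::comm_monoid_add"
  by (simp add: sum.Plus[of UNIV UNIV, simplified] comp_def)

lemma lin_zero: "lin f \<Longrightarrow> f 0 = 0"
  unfolding lin_def by (metis add_cancel_right_right)

lemma lin_diff: "lin f \<Longrightarrow> f (x - y) = f x - f y"
  unfolding lin_def by (metis add_diff_cancel eq_diff_eq)

lemma lin_sum: "lin f \<Longrightarrow> f (\<Sum>a\<in>A. g a) = (\<Sum>a\<in>A. f (g a))"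
  by (induction A rule: infinite_finite_induct) (auto simp: lin_zero lin_def)

lemma unitv_expansion: "x = (\<Sum>c\<in>UNIV. scl (x c) (unitv c))"
  for x :: "'i::finite \<Rightarrow> 'k::field"
  by (rule ext) (simp add: sum_fun_apply scl_def unitv_def if_distrib[of "times _"] eq_commute cong: if_cong)

lemma pairing_unitv: "pairing (unitv l) v = v l"
  by (simp add: pairing_def unitv_def if_distrib[of "\<lambda>c. c * _"] cong: if_cong)

lemma lin_expand:
  fixes x :: "'i::finite \<Rightarrow> 'k::field"
  assumes "lin f"
  shows "f x b = (\<Sum>c\<in>UNIV. f (unitv c) b * x c)"
proof -
  have "f x = f (\<Sum>c\<in>UNIV. scl (x c) (unitv c))"
    by (subst unitv_expansion) (rule refl)
  also have "\<dots> = (\<Sum>c\<in>UNIV. scl (x c) (f (unitv c)))"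
    using assms by (simp add: lin_sum lin_def)
  finally show ?thesis by (simp add: sum_fun_apply scl_def mult.commute)
qed

lemma bilinear_expand:
  fixes br :: "('i::finite \<Rightarrow> 'k::field) \<Rightarrow> ('j::finite \<Rightarrow> 'k) \<Rightarrow> ('l \<Rightarrow> 'k)"
  assumes "\<forall>x. lin (br x)" and "\<forall>y. lin (\<lambda>x. br x y)"
  shows "br x y a = (\<Sum>p\<in>UNIV. \<Sum>s\<in>UNIV. x p * y s * br (unitv p) (unitv s) a)"
proof -
  have "br x y a = (\<Sum>s\<in>UNIV. br x (unitv s) a * y s)"
    using assms(1) by (rule_tac lin_expand) blast
  also have "\<dots> = (\<Sum>s\<in>UNIV. (\<Sum>p\<in>UNIV. br (unitv p) (unitv s) a * x p) * y s)"
    using assms(2) by (subst lin_expand[of "\<lambda>x. br x _"]) blast+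
  also have "\<dots> = (\<Sum>p\<in>UNIV. \<Sum>s\<in>UNIV. x p * y s * br (unitv p) (unitv s) a)"
    by (subst sum.swap) (simp add: sum_distrib_left sum_distrib_right mult_ac)
  finally show ?thesis .
qed

lemma lin_action_expand:
  fixes rho :: "('i::finite \<Rightarrow> 'k::field) \<Rightarrow> ('j::finite \<Rightarrow> 'k) \<Rightarrow> ('j \<Rightarrow> 'k)"
  assumes "lin f" and "\<forall>u. lin (\<lambda>x. rho x u)"
  shows "f (rho x u) a = (\<Sum>m\<in>UNIV. \<Sum>t\<in>UNIV. f (unitv m) a * x t * rho (unitv t) u m)"
    \<comment> \<open>both summation orders occur among the components of [[r_K, r_K]]\<close>
    and "f (rho x u) a = (\<Sum>t\<in>UNIV. \<Sum>m\<in>UNIV. x t * f (unitv m) a * rho (unitv t) u m)"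
proof -
  have "f (rho x u) a = (\<Sum>m\<in>UNIV. f (unitv m) a * rho x u m)"
    using assms(1) by (rule lin_expand)
  also have "\<dots> = (\<Sum>m\<in>UNIV. f (unitv m) a * (\<Sum>t\<in>UNIV. rho (unitv t) u m * x t))"
    using assms(2) by (subst lin_expand[of "\<lambda>x. rho x u"]) blast+
  also have "\<dots> = (\<Sum>m\<in>UNIV. \<Sum>t\<in>UNIV. f (unitv m) a * x t * rho (unitv t) u m)"
    by (simp add: sum_distrib_right sum_distrib_left mult_ac)
  finally show "f (rho x u) a = (\<Sum>m\<in>UNIV. \<Sum>t\<in>UNIV. f (unitv m) a * x t * rho (unitv t) u m)" .
  then show "f (rho x u) a = (\<Sum>t\<in>UNIV. \<Sum>m\<in>UNIV. x t * f (unitv m) a * rho (unitv t) u m)"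
    by (subst (asm) sum.swap) (simp add: mult_ac)
qed

lemma rK_apply [simp]:
  "rK K (Inl a) (Inl b) = 0" "rK K (Inl a) (Inr j) = K (unitv j) a"
  "rK K (Inr j) (Inl a) = - K (unitv j) a" "rK K (Inr j) (Inr l) = 0"
  by (simp_all add: rK_def Kbar_def flip_def)

lemma gpart_wpart_unitv [simp]:
  "gpart (unitv (Inl p) :: 'i + 'j \<Rightarrow> 'k::field) = unitv p"
  "wpart (unitv (Inl p) :: 'i + 'j \<Rightarrow> 'k::field) = 0"
  "gpart (unitv (Inr l) :: 'i + 'j \<Rightarrow> 'k::field) = 0"
  "wpart (unitv (Inr l) :: 'i + 'j \<Rightarrow> 'k::field) = unitv l"
  by (auto simp: gpart_def wpart_def unitv_def)

lemma dual_rep_zero [simp]: "dual_rep rho x 0 = 0"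
  by (rule ext) (simp add: dual_rep_def pairing_def)

lemma dual_rep_zero_left:
  assumes "\<forall>u. lin (\<lambda>x. rho x u)"
  shows "dual_rep rho 0 xi = 0"
  using assms by (intro ext) (simp add: dual_rep_def pairing_def lin_zero[of "\<lambda>x. rho x _"])

lemma dual_rep_unitv: "dual_rep rho x (unitv l) j = - rho x (unitv j) l"
  by (simp add: dual_rep_def pairing_unitv)

lemma semidirect_br_unitv:
  fixes br :: "('i::finite \<Rightarrow> 'k::field) \<Rightarrow> ('i \<Rightarrow> 'k) \<Rightarrow> ('i \<Rightarrow> 'k)"
    and rho :: "('i \<Rightarrow> 'k) \<Rightarrow> ('j::finite \<Rightarrow> 'k) \<Rightarrow> ('j \<Rightarrow> 'k)"
  assumes "\<forall>x. lin (br x)" and "\<forall>y. lin (\<lambda>x. br x y)" and "\<forall>u. lin (\<lambda>x. rho x u)"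
  shows
    "semidirect_br br rho (unitv (Inl p)) (unitv (Inl s)) (Inl a) = br (unitv p) (unitv s) a"
    "semidirect_br br rho (unitv (Inl p)) (unitv (Inl s)) (Inr i) = 0"
    "semidirect_br br rho (unitv (Inl p)) (unitv (Inr l)) (Inl a) = 0"
    "semidirect_br br rho (unitv (Inl p)) (unitv (Inr l)) (Inr i) = - rho (unitv p) (unitv i) l"
    "semidirect_br br rho (unitv (Inr l)) (unitv (Inl s)) (Inl a) = 0"
    "semidirect_br br rho (unitv (Inr l)) (unitv (Inl s)) (Inr i) = rho (unitv s) (unitv i) l"
    "semidirect_br br rho (unitv (Inr l)) (unitv (Inr m)) z = 0"
  using assms lin_zero[of "br _"] lin_zero[of "\<lambda>x. br x _"] dual_rep_zero_left[of rho]
  by (auto simp: semidirect_br_def dual_rep_unitv split: sum.split)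

definition rota_baxter_defect ::
  "(('i \<Rightarrow> 'k::field) \<Rightarrow> ('i \<Rightarrow> 'k) \<Rightarrow> ('i \<Rightarrow> 'k)) \<Rightarrow> (('i \<Rightarrow> 'k) \<Rightarrow> ('j \<Rightarrow> 'k) \<Rightarrow> ('j \<Rightarrow> 'k))
    \<Rightarrow> (('j \<Rightarrow> 'k) \<Rightarrow> ('i \<Rightarrow> 'k)) \<Rightarrow> ('j \<Rightarrow> 'k) \<Rightarrow> ('j \<Rightarrow> 'k) \<Rightarrow> ('i \<Rightarrow> 'k)" where
  "rota_baxter_defect br rho K u v = br (K u) (K v) - K (rho (K u) v - rho (K v) u)"

context
  fixes br :: "('i::finite \<Rightarrow> 'k::field) \<Rightarrow> ('i \<Rightarrow> 'k) \<Rightarrow> ('i \<Rightarrow> 'k)"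
    and rho :: "('i \<Rightarrow> 'k) \<Rightarrow> ('j::finite \<Rightarrow> 'k) \<Rightarrow> ('j \<Rightarrow> 'k)"
    and K :: "('j \<Rightarrow> 'k) \<Rightarrow> ('i \<Rightarrow> 'k)"
  assumes br_lin_right: "\<forall>x. lin (br x)" and br_lin_left: "\<forall>y. lin (\<lambda>x. br x y)"
    and rho_lin_left: "\<forall>u. lin (\<lambda>x. rho x u)"
begin

lemma cybe_rK_rota_baxter_defect:
  assumes "lin K"
  shows "cybe (semidirect_br br rho) (rK K) (Inl a) (Inr j) (Inr l)
      = rota_baxter_defect br rho K (unitv j) (unitv l) a"
    and "cybe (semidirect_br br rho) (rK K) (Inr j) (Inl a) (Inr l)
      = - rota_baxter_defect br rho K (unitv j) (unitv l) a"
    and "cybe (semidirect_br br rho) (rK K) (Inr j) (Inr l) (Inl a)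
      = rota_baxter_defect br rho K (unitv j) (unitv l) a"
  using lin_diff[OF assms] unfolding cybe_def sum_UNIV_Plus rota_baxter_defect_def
  by (simp_all add: semidirect_br_unitv[OF br_lin_right br_lin_left rho_lin_left] sum_negf
      bilinear_expand[OF br_lin_right br_lin_left, symmetric]
      lin_action_expand[OF assms rho_lin_left, symmetric])

lemma cybe_rK_vanishing_components:
  "cybe (semidirect_br br rho) (rK K) (Inl a) (Inl b) (Inl c) = 0"
  "cybe (semidirect_br br rho) (rK K) (Inl a) (Inl b) (Inr l) = 0"
  "cybe (semidirect_br br rho) (rK K) (Inl a) (Inr j) (Inl c) = 0"
  "cybe (semidirect_br br rho) (rK K) (Inr j) (Inl b) (Inl c) = 0"
  "cybe (semidirect_br br rho) (rK K) (Inr j) (Inr l) (Inr m) = 0"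
  unfolding cybe_def sum_UNIV_Plus
  by (simp_all add: semidirect_br_unitv[OF br_lin_right br_lin_left rho_lin_left])

lemma cybe_rK_eq_0:
  assumes "lin K" and "\<forall>u v. br (K u) (K v) = K (rho (K u) v - rho (K v) u)"
  shows "cybe (semidirect_br br rho) (rK K) = (\<lambda>a b c. 0)"
proof (intro ext)
  fix a b c
  have "rota_baxter_defect br rho K u v = 0" for u v
    using assms(2) by (simp add: rota_baxter_defect_def)
  then show "cybe (semidirect_br br rho) (rK K) a b c = 0"
    by (cases a; cases b; cases c) (simp_all add: cybe_rK_rota_baxter_defect[OF assms(1)] cybe_rK_vanishing_components)
qed

end

lemma dual_map_zero [simp]: "dual_map T 0 = 0"
  by (rule ext) (simp add: dual_map_def pairing_def)

lemma dual_map_unitv: "dual_map T (unitv m) j = T (unitv j) m"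
  by (simp add: dual_map_def pairing_unitv)

lemma semidirect_op_unitv:
  assumes "lin E"
  shows "semidirect_op E T (unitv (Inl c)) (Inl a) = E (unitv c) a"
    "semidirect_op E T (unitv (Inl c)) (Inr j) = 0"
    "semidirect_op E T (unitv (Inr m)) (Inl a) = 0"
    "semidirect_op E T (unitv (Inr m)) (Inr j) = T (unitv j) m"
  using lin_zero[OF assms] by (simp_all add: semidirect_op_def dual_map_unitv)

lemma rK_skew: "rK K = (\<lambda>p q. - flip (rK K) p q)"
  by (intro ext) (simp add: rK_def flip_def)

lemma op_tensor_diff_symmetric:
  assumes "r = (\<lambda>p q. - flip r p q)"
  shows "op_tensor_diff A r b a = op_tensor_diff A r a b"
proof -
  have skew: "r p q = - r q p" for p q
    using assms by (metis flip_def)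
  show ?thesis
    unfolding op_tensor_diff_def by (simp add: skew[of _ a] skew[of b] sum_negf mult.commute)
qed

lemma op_tensor_diff_rK:
  fixes E :: "('i::finite \<Rightarrow> 'k::field) \<Rightarrow> ('i \<Rightarrow> 'k)" and T :: "('j::finite \<Rightarrow> 'k) \<Rightarrow> ('j \<Rightarrow> 'k)"
    and K :: "('j \<Rightarrow> 'k) \<Rightarrow> ('i \<Rightarrow> 'k)"
  assumes "lin E" and "lin K"
  shows "op_tensor_diff (semidirect_op E T) (rK K) (Inl a) (Inr j) = E (K (unitv j)) a - K (T (unitv j)) a"
    "op_tensor_diff (semidirect_op E T) (rK K) (Inl a) (Inl b) = 0"
    "op_tensor_diff (semidirect_op E T) (rK K) (Inr j) (Inr l) = 0"
  unfolding op_tensor_diff_def sum_UNIV_Plus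
  by (simp_all add: semidirect_op_unitv[OF assms(1)] lin_expand[OF assms(1), symmetric] lin_expand[OF assms(2), symmetric])

lemma op_tensor_diff_rK_eq_0:
  fixes E :: "('i::finite \<Rightarrow> 'k::field) \<Rightarrow> ('i \<Rightarrow> 'k)" and T :: "('j::finite \<Rightarrow> 'k) \<Rightarrow> ('j \<Rightarrow> 'k)"
    and K :: "('j \<Rightarrow> 'k) \<Rightarrow> ('i \<Rightarrow> 'k)"
  assumes "lin E" and "lin K" and "\<forall>u. E (K u) = K (T u)"
  shows "op_tensor_diff (semidirect_op E T) (rK K) = (\<lambda>a b. 0)"
proof (intro ext)
  fix a b
  have mixed: "op_tensor_diff (semidirect_op E T) (rK K) (Inl c) (Inr j) = 0" for c j
    using assms(3) by (simp add: op_tensor_diff_rK[OF assms(1,2)])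
  moreover have "op_tensor_diff (semidirect_op E T) (rK K) (Inr j) (Inl c) = 0" for c j
    using mixed by (simp add: op_tensor_diff_symmetric[OF rK_skew, where b = "Inr j" and a = "Inl c"])
  ultimately show "op_tensor_diff (semidirect_op E T) (rK K) a b = 0"
    by (cases a; cases b) (simp_all add: op_tensor_diff_rK[OF assms(1,2)])
qed

theorem theorem6p9:
  fixes br :: "('i::finite \<Rightarrow> 'k::field_char_0) \<Rightarrow> ('i \<Rightarrow> 'k) \<Rightarrow> ('i \<Rightarrow> 'k)"
    and E :: "('i \<Rightarrow> 'k) \<Rightarrow> ('i \<Rightarrow> 'k)"
    and rho :: "('i \<Rightarrow> 'k) \<Rightarrow> ('j::finite \<Rightarrow> 'k) \<Rightarrow> ('j \<Rightarrow> 'k)"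
    and T :: "('j \<Rightarrow> 'k) \<Rightarrow> ('j \<Rightarrow> 'k)"
    and K :: "('j \<Rightarrow> 'k) \<Rightarrow> ('i \<Rightarrow> 'k)"
  assumes "alg_closed TYPE('k)"
    and "ENL br E"
    and "ENE_rep br E T rho"
    and "ENE_RB br E T rho K"
  shows "rK K = (\<lambda>p q. - flip (rK K) p q)
    \<and> cybe (semidirect_br br rho) (rK K) = (\<lambda>a b c. 0)
    \<and> op_tensor_diff (semidirect_op E T) (rK K) = (\<lambda>a b. 0)"
proof -
  have br_lin: "\<forall>x. lin (br x)" "\<forall>y. lin (\<lambda>x. br x y)" and E_lin: "lin E"
    using assms(2) unfolding ENL_def lie_algebra_def by blast+
  have rho_lin: "\<forall>u. lin (\<lambda>x. rho x u)"
    using assms(3) unfolding ENE_rep_def representation_def by blast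
  have K_lin: "lin K" and rota_baxter: "\<forall>u v. br (K u) (K v) = K (rho (K u) v - rho (K v) u)"
    and EK_KT: "\<forall>u. E (K u) = K (T u)"
    using assms(4) unfolding ENE_RB_def by blast+
  show ?thesis
    by (intro conjI rK_skew cybe_rK_eq_0[OF br_lin rho_lin K_lin rota_baxter]
        op_tensor_diff_rK_eq_0[OF E_lin K_lin EK_KT])
qed

end
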